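(* Let $\rho\in\{1/2,1\}$, let $s>0$ and $\eta>0$ be real numbers, let $q\in\mathbb{C}$, and let $\epsilon<1$ be real. Define $\ell:(0,\infty)\to\mathbb{R}$ by $$\ell(\gamma) = -\rho\log(1+\gamma s) + \rho\,\frac{|q|^2}{\gamma^{-1}+s} + (\epsilon-1)\log\gamma - \eta\gamma .$$ Then $\ell$ has at most a single local maximum on $(0,\infty)$.
   Context: This function arises in a sparse Bayesian learning scheme: $\rho=1/2$ corresponds to a real signal model and $\rho=1$ to a complex one; $\epsilon$ is the shape parameter and $\eta$ the (positive) rate parameter of a gamma hyperprior; $s=\mathbf{h}^H\mathbf{C}^{-1}\mathbf{h}$ and $q=\mathbf{y}^H\mathbf{C}^{-1}\mathbf{h}$ for a nonzero vector $\mathbf{h}$, a vector $\mathbf{y}$, and a Hermitian positive definite matrix $\mathbf{C}$, so in particular $s>0$. The domain of $\ell$ is $(0,\infty)$. *)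

theory Defs
  imports "HOL-Analysis.Analysis"
begin

definition ell :: "real \<Rightarrow> real \<Rightarrow> complex \<Rightarrow> real \<Rightarrow> real \<Rightarrow> real \<Rightarrow> real" where
  "ell \<rho> s q \<epsilon> \<eta> \<gamma> =
     - \<rho> * ln (1 + \<gamma> * s) + \<rho> * ((cmod q)\<^sup>2 / (inverse \<gamma> + s))
     + (\<epsilon> - 1) * ln \<gamma> - \<eta> * \<gamma>"

definition local_max_on :: "(real \<Rightarrow> real) \<Rightarrow> real set \<Rightarrow> real \<Rightarrow> bool" where
  "local_max_on f S x \<longleftrightarrow> x \<in> S \<and> (\<exists>\<delta>>0. \<forall>y\<in>S. \<bar>y - x\<bar> < \<delta> \<longrightarrow> f y \<le> f x)"

end

theory Submission
  imports Defs "HOL-Computational_Algebra.Polynomial" "HOL-Real_Asymp.Real_Asymp"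
begin

text \<open>
  Since \<open>\<epsilon> < 1\<close>, the term \<open>(\<epsilon> - 1) ln \<gamma>\<close> makes \<open>\<ell>\<close> tend to \<open>+\<infinity>\<close> as \<open>\<gamma> \<rightarrow> 0\<^sup>+\<close>, and
  \<open>\<gamma> (1 + \<gamma> s)\<^sup>2 \<ell>'(\<gamma>)\<close> is a nonzero cubic polynomial in \<open>\<gamma>\<close>, so \<open>\<ell>\<close> has at most three
  critical points. If \<open>a < b\<close> were two local maxima, then \<open>\<ell>\<close> would attain an interior
  minimum both on \<open>[x\<^sub>0, a]\<close>, where \<open>\<ell>(x\<^sub>0) > \<ell>(a)\<close>, and on \<open>[a, b]\<close>; together with \<open>a\<close> and
  \<open>b\<close> these are four distinct critical points.
\<close>

lemma continuous_on_interior_argmin: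
  fixes f :: "real \<Rightarrow> real"
  assumes "continuous_on {u..v} f"
    and "\<exists>y\<in>{u<..<v}. f y \<le> f u" and "\<exists>y\<in>{u<..<v}. f y \<le> f v"
  obtains c where "c \<in> {u<..<v}" and "\<forall>x\<in>{u..v}. f c \<le> f x"
proof -
  have "u < v" using assms(2) by auto
  then obtain m where m: "m \<in> {u..v}" "\<forall>x\<in>{u..v}. f m \<le> f x"
    using continuous_attains_inf[OF _ _ assms(1)] by auto
  consider "m = u" | "m = v" | "m \<in> {u<..<v}" using m(1) by force
  then show ?thesis
  proof cases
    case 1
    then show ?thesis using m assms(2) that by force
  next
    case 2
    then show ?thesis using m assms(3) that by force
  qed (use m that in blast)
qed

lemma DERIV_zero_between:
  fixes f f' :: "real \<Rightarrow> real"
  assumes der: "\<And>x. x \<in> {u..v} \<Longrightarrow> (f has_real_derivative f' x) (at x)"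
    and "\<exists>y\<in>{u<..<v}. f y \<le> f u" and "\<exists>y\<in>{u<..<v}. f y \<le> f v"
  shows "\<exists>c\<in>{u<..<v}. f' c = 0"
proof -
  have "continuous_on {u..v} f"
    using der by (intro continuous_at_imp_continuous_on ballI DERIV_isCont) auto
  then obtain c where c: "c \<in> {u<..<v}" "\<forall>x\<in>{u..v}. f c \<le> f x"
    using continuous_on_interior_argmin assms(2,3) by blast
  have min: "\<forall>y. \<bar>c - y\<bar> < min (c - u) (v - c) \<longrightarrow> f c \<le> f y"
    using c by (auto simp: abs_less_iff)
  have "f' c = 0"
    using DERIV_local_min[OF der[of c] _ min] c by auto
  with c show ?thesis by blast
qed

lemma local_max_on_openE:
  assumes "local_max_on f S a" and "open S"
  obtains \<delta> where "\<delta> > 0" and "\<And>y. \<bar>y - a\<bar> < \<delta> \<Longrightarrow> f y \<le> f a"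
proof -
  obtain \<delta> where \<delta>: "\<delta> > 0" "\<forall>y\<in>S. \<bar>y - a\<bar> < \<delta> \<longrightarrow> f y \<le> f a" and "a \<in> S"
    using assms(1) unfolding local_max_on_def by blast
  then obtain e where "e > 0" "ball a e \<subseteq> S"
    using assms(2) openE by blast
  then have "\<bar>y - a\<bar> < min \<delta> e \<Longrightarrow> f y \<le> f a" for y
    using \<delta> by (auto simp: dist_real_def abs_minus_commute)
  then show ?thesis using that[of "min \<delta> e"] \<open>e > 0\<close> \<delta>(1) by force
qed

lemma local_max_on_DERIV_zero:
  assumes "local_max_on f S a" and "open S" and "(f has_real_derivative D) (at a)"
  shows "D = 0"
proof -
  obtain \<delta> where "\<delta> > 0" "\<And>y. \<bar>y - a\<bar> < \<delta> \<Longrightarrow> f y \<le> f a"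
    using local_max_on_openE[OF assms(1,2)] by blast
  then show ?thesis
    using DERIV_local_max[OF assms(3), of \<delta>] by (auto simp: abs_minus_commute)
qed

lemma local_max_on_left_le:
  assumes "local_max_on f S a" and "open S" and "u < a"
  shows "\<exists>y\<in>{u<..<a}. f y \<le> f a"
proof -
  obtain \<delta> where "\<delta> > 0" "\<And>y. \<bar>y - a\<bar> < \<delta> \<Longrightarrow> f y \<le> f a"
    using local_max_on_openE[OF assms(1,2)] by blast
  then show ?thesis
    using assms(3) by (intro bexI[of _ "a - min \<delta> (a - u) / 2"]) (auto simp: min_def field_simps)
qed

lemma local_max_on_right_le:
  assumes "local_max_on f S a" and "open S" and "a < v"
  shows "\<exists>y\<in>{a<..<v}. f y \<le> f a"
proof -
  obtain \<delta> where "\<delta> > 0" "\<And>y. \<bar>y - a\<bar> < \<delta> \<Longrightarrow> f y \<le> f a"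
    using local_max_on_openE[OF assms(1,2)] by blast
  then show ?thesis
    using assms(3) by (intro bexI[of _ "a + min \<delta> (v - a) / 2"]) (auto simp: min_def field_simps)
qed

lemma filterlim_at_right_0_exceeds:
  fixes f :: "real \<Rightarrow> real"
  assumes "filterlim f at_top (at_right 0)" and "a > 0"
  shows "\<exists>x\<in>{0<..<a}. f a < f x"
proof -
  obtain b where "b > 0" "\<And>y. 0 < y \<Longrightarrow> y < b \<Longrightarrow> f a < f y"
    using assms(1) by (auto simp: filterlim_at_top_dense eventually_at_right_field)
  then show ?thesis
    using assms(2) by (intro bexI[of _ "min a b / 2"]) auto
qed

lemma local_max_on_unique:
  fixes f f' :: "real \<Rightarrow> real"
  assumes der: "\<And>x. x > 0 \<Longrightarrow> (f has_real_derivative f' x) (at x)"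
    and lim: "filterlim f at_top (at_right 0)"
    and fin: "finite {x. 0 < x \<and> f' x = 0}"
    and card: "card {x. 0 < x \<and> f' x = 0} \<le> 3"
    and "local_max_on f {0<..} a" and "local_max_on f {0<..} b"
  shows "a = b"
proof -
  have not_less: "\<not> a < b" if a: "local_max_on f {0<..} a" and b: "local_max_on f {0<..} b" for a b
  proof
    assume "a < b"
    have "a > 0" using a by (simp add: local_max_on_def)
    obtain x\<^sub>0 where x\<^sub>0: "0 < x\<^sub>0" "x\<^sub>0 < a" "f a < f x\<^sub>0"
      using filterlim_at_right_0_exceeds[OF lim \<open>a > 0\<close>] by auto
    obtain y where y: "y \<in> {x\<^sub>0<..<a}" "f y \<le> f a"
      using local_max_on_left_le[OF a open_greaterThan \<open>x\<^sub>0 < a\<close>] by auto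
    have "\<exists>c\<in>{x\<^sub>0<..<a}. f' c = 0"
      by (rule DERIV_zero_between[where f = f]) (use der x\<^sub>0 y in \<open>auto intro!: bexI[of _ y]\<close>)
    then obtain c\<^sub>1 where c\<^sub>1: "c\<^sub>1 \<in> {x\<^sub>0<..<a}" "f' c\<^sub>1 = 0" by blast
    have "\<exists>c\<in>{a<..<b}. f' c = 0"
      by (rule DERIV_zero_between[where f = f])
        (use der \<open>a > 0\<close> local_max_on_right_le[OF a open_greaterThan \<open>a < b\<close>]
           local_max_on_left_le[OF b open_greaterThan \<open>a < b\<close>] in auto)
    then obtain c\<^sub>2 where c\<^sub>2: "c\<^sub>2 \<in> {a<..<b}" "f' c\<^sub>2 = 0" by blast
    have "f' a = 0" "f' b = 0"
      using local_max_on_DERIV_zero[OF a open_greaterThan der] local_max_on_DERIV_zero[OF b open_greaterThan der]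
        \<open>a > 0\<close> \<open>a < b\<close> by auto
    then have "{c\<^sub>1, a, c\<^sub>2, b} \<subseteq> {x. 0 < x \<and> f' x = 0}"
      using c\<^sub>1 c\<^sub>2 x\<^sub>0 \<open>a < b\<close> by auto
    moreover have "card {c\<^sub>1, a, c\<^sub>2, b} = 4"
      using c\<^sub>1 c\<^sub>2 by auto
    ultimately show False
      using card_mono[OF fin, of "{c\<^sub>1, a, c\<^sub>2, b}"] card by linarith
  qed
  show ?thesis using not_less[OF assms(5,6)] not_less[OF assms(6,5)] by linarith
qed

definition ell_numerator :: "real \<Rightarrow> real \<Rightarrow> complex \<Rightarrow> real \<Rightarrow> real \<Rightarrow> real poly" where
  "ell_numerator \<rho> s q \<epsilon> \<eta> = [: \<epsilon> - 1, 2 * s * (\<epsilon> - 1) - \<rho> * s + \<rho> * (cmod q)\<^sup>2 - \<eta>,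
       s\<^sup>2 * (\<epsilon> - 1) - \<rho> * s\<^sup>2 - 2 * \<eta> * s, - \<eta> * s\<^sup>2 :]"

lemma ell_has_real_derivative:
  assumes "s > 0" and "\<gamma> > 0"
  shows "(ell \<rho> s q \<epsilon> \<eta> has_real_derivative
           poly (ell_numerator \<rho> s q \<epsilon> \<eta>) \<gamma> / (\<gamma> * (1 + \<gamma> * s)\<^sup>2)) (at \<gamma>)"
proof -
  have pos: "0 < 1 + \<gamma> * s" "0 < inverse \<gamma> + s"
    using assms by (simp_all add: add_pos_pos)
  have ne: "1 + \<gamma> * s \<noteq> 0" "1 + s * \<gamma> \<noteq> 0"
    using pos by (auto simp: mult.commute)
  define D where "D = - \<rho> * (s / (1 + \<gamma> * s))
    + \<rho> * ((cmod q)\<^sup>2 * (inverse \<gamma> * inverse \<gamma>) / (inverse \<gamma> + s)\<^sup>2) + (\<epsilon> - 1) * (1 / \<gamma>) - \<eta>"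
  have deriv: "(ell \<rho> s q \<epsilon> \<eta> has_real_derivative D) (at \<gamma>)"
    unfolding ell_def[abs_def] D_def using assms pos
    by (auto intro!: derivative_eq_intros simp: power2_eq_square mult.commute)
  have "inverse \<gamma> + s = (1 + \<gamma> * s) / \<gamma>"
    using assms by (simp add: field_simps)
  then have "D = poly (ell_numerator \<rho> s q \<epsilon> \<eta>) \<gamma> / (\<gamma> * (1 + \<gamma> * s)\<^sup>2)"
    unfolding D_def using assms
    by (simp add: ell_numerator_def divide_simps power2_eq_square ne) algebra
  with deriv show ?thesis by simp
qed

lemma ell_tendsto_at_right_0:
  assumes "s > 0" and "\<epsilon> < 1"
  shows "filterlim (ell \<rho> s q \<epsilon> \<eta>) at_top (at_right 0)"
  unfolding ell_def using assms by real_asymp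

lemma card_roots_ell_numerator:
  assumes "s > 0" and "\<eta> > 0"
  shows "finite {x. poly (ell_numerator \<rho> s q \<epsilon> \<eta>) x = 0}"
    and "card {x. poly (ell_numerator \<rho> s q \<epsilon> \<eta>) x = 0} \<le> 3"
proof -
  have nz: "ell_numerator \<rho> s q \<epsilon> \<eta> \<noteq> 0"
    using assms by (simp add: ell_numerator_def)
  then show "finite {x. poly (ell_numerator \<rho> s q \<epsilon> \<eta>) x = 0}"
    by (rule poly_roots_finite)
  have "degree (ell_numerator \<rho> s q \<epsilon> \<eta>) \<le> 3"
    by (simp add: ell_numerator_def degree_pCons_eq_if)
  then show "card {x. poly (ell_numerator \<rho> s q \<epsilon> \<eta>) x = 0} \<le> 3"
    using card_poly_roots_bound[OF nz] by linarith
qed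

theorem proposition1:
  fixes \<rho> s \<eta> \<epsilon> :: real and q :: complex
  assumes "\<rho> = 1/2 \<or> \<rho> = 1"
    and "s > 0" and "\<eta> > 0" and "\<epsilon> < 1"
  shows "\<forall>a b. local_max_on (ell \<rho> s q \<epsilon> \<eta>) {0<..} a
            \<and> local_max_on (ell \<rho> s q \<epsilon> \<eta>) {0<..} b \<longrightarrow> a = b"
proof (intro allI impI, elim conjE)
  fix a b
  assume "local_max_on (ell \<rho> s q \<epsilon> \<eta>) {0<..} a" "local_max_on (ell \<rho> s q \<epsilon> \<eta>) {0<..} b"
  define f' where "f' \<gamma> = poly (ell_numerator \<rho> s q \<epsilon> \<eta>) \<gamma> / (\<gamma> * (1 + \<gamma> * s)\<^sup>2)" for \<gamma>
  have crit: "{x. 0 < x \<and> f' x = 0} \<subseteq> {x. poly (ell_numerator \<rho> s q \<epsilon> \<eta>) x = 0}"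
    using \<open>s > 0\<close> by (auto simp: f'_def add_pos_pos less_imp_neq[symmetric])
  show "a = b"
  proof (rule local_max_on_unique)
    show "(ell \<rho> s q \<epsilon> \<eta> has_real_derivative f' x) (at x)" if "x > 0" for x
      unfolding f'_def using ell_has_real_derivative \<open>s > 0\<close> that .
    show "finite {x. 0 < x \<and> f' x = 0}"
      using finite_subset[OF crit card_roots_ell_numerator(1)[OF assms(2,3)]] .
    show "card {x. 0 < x \<and> f' x = 0} \<le> 3"
      using order_trans[OF card_mono[OF card_roots_ell_numerator(1)[OF assms(2,3)] crit]
          card_roots_ell_numerator(2)[OF assms(2,3)]] .
  qed (fact ell_tendsto_at_right_0[OF assms(2,4)] \<open>local_max_on _ _ a\<close> \<open>local_max_on _ _ b\<close>)+
qed

end
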